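(* Let $E$ be a nonzero real Banach space, $f_0\colon E\times E^*\to\,]{-}\infty,\infty]$ proper, convex and lower semicontinuous, $z^{**}\in E^{**}$ with $f_0^{**}(z^{**},0)\le0$, and $z^*\in E^*$. Then for all $n\in\mathbb N$ there exists $(x_n,x_n^* )\in E\times E^*$ such that $f_0(x_n,x_n^* )\le1/n^2$, $\|x_n\|\le\|z^{**}\|+1/n^2$, $\|x_n^*\|\le1/n^2$ and $|\langle x_n,z^*\rangle-\langle z^*,z^{**}\rangle|\le1/n^2$.
   Context: $(E\times E^* )^*$ is identified with $E^*\times E^{**}$ via $\langle (x,x^* ),(y^*,y^{**})\rangle=\langle x,y^*\rangle+\langle x^*,y^{**}\rangle$, so $(E\times E^* )^{**}$ is identified with $E^{**}\times E^{***}$; $f_0^*$ is the Fenchel conjugate on $E^*\times E^{**}$ and $f_0^{**}(x^{**},x^{***})=\sup_{(y^*,y^{**})}[\langle y^*,x^{**}\rangle+\langle y^{**},x^{***}\rangle-f_0^*(y^*,y^{**})]$. *)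

theory Defs
  imports "HOL-Analysis.Analysis"
begin

definition proper_fun :: "('a \<Rightarrow> ereal) \<Rightarrow> bool" where
  "proper_fun f \<longleftrightarrow> (\<forall>x. f x \<noteq> -\<infinity>) \<and> (\<exists>x. f x \<noteq> \<infinity>)"

definition convex_fun :: "('a::real_vector \<Rightarrow> ereal) \<Rightarrow> bool" where
  "convex_fun f \<longleftrightarrow> (\<forall>x y t. 0 \<le> t \<and> t \<le> 1 \<longrightarrow>
      f ((1 - t) *\<^sub>R x + t *\<^sub>R y) \<le> ereal (1 - t) * f x + ereal t * f y)"

definition lsc_fun :: "('a::topological_space \<Rightarrow> ereal) \<Rightarrow> bool" where
  "lsc_fun f \<longleftrightarrow> (\<forall>c::real. closed {x. f x \<le> ereal c})"

definition fenchel_conj ::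
  "('a::real_normed_vector \<times> 'b::real_normed_vector \<Rightarrow> ereal)
     \<Rightarrow> ('a \<Rightarrow>\<^sub>L real) \<times> ('b \<Rightarrow>\<^sub>L real) \<Rightarrow> ereal" where
  "fenchel_conj f = (\<lambda>(a, b). SUP p \<in> UNIV. ereal (a (fst p) + b (snd p)) - f p)"

end

theory Submission
  imports Defs
begin

text \<open>Fix \<open>\<epsilon> = 1/n\<^sup>2\<close> and suppose no \<open>(x, x\<^sup>*)\<close> has the four properties. Then the convex set
  of all \<open>(x - u, x\<^sup>*, s, \<langle>x, z\<^sup>*\<rangle> - \<langle>z\<^sup>*, z\<^sup>*\<^sup>*\<rangle>)\<close> with \<open>f\<^sub>0(x, x\<^sup>*) \<le> s\<close> and
  \<open>\<parallel>u\<parallel> \<le> \<parallel>z\<^sup>*\<^sup>*\<parallel>\<close> keeps norm distance \<open>\<epsilon>\<close> from the origin, so by the Hahn--Banach theorem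
  (in Mazur--Orlicz form) a continuous functional is \<open>\<ge> \<epsilon>\<close> on it. This yields an affine
  inequality \<open>A x + G x\<^sup>* + \<beta> s \<ge> \<kappa>\<close> on the epigraph of \<open>f\<^sub>0\<close> with \<open>\<beta> \<ge> 0\<close> and
  \<open>\<langle>A, z\<^sup>*\<^sup>*\<rangle> < \<kappa>\<close>. Adding a large multiple of it to a continuous affine minorant of
  \<open>f\<^sub>0\<close> (which exists by lower semicontinuity) gives an affine minorant whose value at
  \<open>(z\<^sup>*\<^sup>*, 0)\<close> is positive, hence \<open>f\<^sub>0\<^sup>*\<^sup>*(z\<^sup>*\<^sup>*, 0) > 0\<close>.\<close>

section \<open>Hahn--Banach for sublinear functionals\<close>

definition sublinear :: "('v::real_vector \<Rightarrow> real) \<Rightarrow> bool" where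
  "sublinear q \<longleftrightarrow> (\<forall>x y. q (x + y) \<le> q x + q y) \<and> (\<forall>c x. 0 < c \<longrightarrow> q (c *\<^sub>R x) = c * q x)"

lemma
  assumes "sublinear q"
  shows sublinear_add: "q (x + y) \<le> q x + q y"
    and sublinear_scaleR: "0 < c \<Longrightarrow> q (c *\<^sub>R x) = c * q x"
  using assms unfolding sublinear_def by auto

lemma sublinear_zero: "sublinear q \<Longrightarrow> q 0 = 0"
  using sublinear_scaleR[of q 2 0] by simp

lemma sublinear_norm: "sublinear norm"
  unfolding sublinear_def by (auto intro: norm_triangle_ineq)

text \<open>A linear functional on a subspace, dominated by \<open>q\<close>, is represented by its graph;
  single-valuedness is then automatic.\<close>
definition dominated_graph :: "('v::real_vector \<Rightarrow> real) \<Rightarrow> ('v \<times> real) set \<Rightarrow> bool" where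
  "dominated_graph q G \<longleftrightarrow> subspace G \<and> (\<forall>(x, a)\<in>G. a \<le> q x)"

lemma dominated_graph_single_valued:
  assumes q: "sublinear q" and G: "dominated_graph q G" and "(x, a) \<in> G" "(x, b) \<in> G"
  shows "a = b"
proof -
  have "(0, a - b) \<in> G" "(0, b - a) \<in> G"
    using G assms(3,4) unfolding dominated_graph_def by (auto dest: subspace_diff)
  then have "a - b \<le> q 0" "b - a \<le> q 0"
    using G unfolding dominated_graph_def by auto
  then show ?thesis using sublinear_zero[OF q] by simp
qed

lemma dominated_graph_Union_chain:
  assumes "C \<in> chains {G. dominated_graph q G}" "C \<noteq> {}"
  shows "dominated_graph q (\<Union>C)"
proof -
  have C: "\<And>G. G \<in> C \<Longrightarrow> subspace G \<and> (\<forall>(x, a)\<in>G. a \<le> q x)"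
    and chain: "\<And>G H. G \<in> C \<Longrightarrow> H \<in> C \<Longrightarrow> G \<subseteq> H \<or> H \<subseteq> G"
    using assms(1) unfolding chains_def chain_subset_def dominated_graph_def by auto
  have "subspace (\<Union>C)"
  proof (rule subspaceI)
    show "0 \<in> \<Union>C" using assms(2) C subspace_0 by blast
    show "u + v \<in> \<Union>C" if uv: "u \<in> \<Union>C" "v \<in> \<Union>C" for u v
    proof -
      obtain G H where "G \<in> C" "H \<in> C" "u \<in> G" "v \<in> H" using uv by blast
      then have "u \<in> G \<union> H" "v \<in> G \<union> H" "G \<union> H \<in> C"
        using chain[of G H] by (auto simp: sup_absorb1 sup_absorb2)
      then show ?thesis using C subspace_add by blast
    qed
    show "c *\<^sub>R u \<in> \<Union>C" if "u \<in> \<Union>C" for c u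
      using that C subspace_scale by blast
  qed
  moreover have "\<forall>(x, a)\<in>\<Union>C. a \<le> q x" using C by blast
  ultimately show ?thesis unfolding dominated_graph_def by blast
qed

text \<open>The admissible values \<open>c\<close> at \<open>v\<close> lie between \<open>b - q (y - v)\<close> and \<open>q (y + v) - b\<close>
  for all \<open>(y, b) \<in> G\<close>; by subadditivity these bounds do not cross.\<close>
lemma dominated_graph_extend:
  assumes q: "sublinear q" and G: "dominated_graph q G"
  shows "\<exists>c. dominated_graph q (span (insert (v, c) G))"
proof -
  have S: "subspace G" and dom: "\<And>x a. (x, a) \<in> G \<Longrightarrow> a \<le> q x"
    using G unfolding dominated_graph_def by auto
  define c where "c = (SUP (y, b)\<in>G. b - q (y - v))"
  have gap: "a - q (x - v) \<le> q (y + v) - b" if "(x, a) \<in> G" "(y, b) \<in> G" for x a y b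
  proof -
    have "a + b \<le> q (x + y)" using dom subspace_add[OF S that] by simp
    also have "\<dots> \<le> q (x - v) + q (y + v)" using sublinear_add[OF q, of "x - v" "y + v"] by simp
    finally show ?thesis by simp
  qed
  have "(0, 0) \<in> G" using subspace_0[OF S] by (simp add: zero_prod_def)
  then have bdd: "bdd_above ((\<lambda>(y, b). b - q (y - v)) ` G)"
    using gap[of _ _ 0 0] by (intro bdd_aboveI2[of _ _ "q v"]) auto
  have c_lower: "a - q (x - v) \<le> c" and c_upper: "c \<le> q (x + v) - a" if "(x, a) \<in> G" for x a
    using that gap bdd unfolding c_def by (auto intro!: cSUP_upper2[of _ _ "(x, a)"] cSUP_least)
  have extend: "a + t * c \<le> q (x + t *\<^sub>R v)" if "(x, a) \<in> G" for x a t
  proof (cases t "0::real" rule: linorder_cases)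
    case less
    have xa: "((-1/t) *\<^sub>R x, (-1/t) * a) \<in> G"
      using subspace_scale[OF S that] by (simp only: scaleR_Pair real_scaleR_def)
    have "(-1/t) *\<^sub>R x - v = (-1/t) *\<^sub>R (x + t *\<^sub>R v)"
      using less by (simp add: scaleR_add_right)
    then have "(-1/t) * (a - q (x + t *\<^sub>R v)) \<le> c"
      using c_lower[OF xa] sublinear_scaleR[OF q, of "-1/t"] less by (simp add: right_diff_distrib)
    then show ?thesis using less by (simp add: field_simps)
  next
    case equal
    then show ?thesis using dom that by simp
  next
    case greater
    have xa: "((1/t) *\<^sub>R x, (1/t) * a) \<in> G"
      using subspace_scale[OF S that] by (simp only: scaleR_Pair real_scaleR_def)
    have "(1/t) *\<^sub>R x + v = (1/t) *\<^sub>R (x + t *\<^sub>R v)"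
      using greater by (simp add: scaleR_add_right)
    then have "c \<le> (1/t) * (q (x + t *\<^sub>R v) - a)"
      using c_upper[OF xa] sublinear_scaleR[OF q, of "1/t"] greater by (simp add: right_diff_distrib)
    then show ?thesis using greater by (simp add: field_simps)
  qed
  have "a \<le> q x" if xa: "(x, a) \<in> span (insert (v, c) G)" for x a
  proof -
    obtain k where "(x - k *\<^sub>R v, a - k * c) \<in> G"
      using xa unfolding span_insert span_eq_iff[THEN iffD2, OF S] by auto
    from extend[OF this, of k] show ?thesis by simp
  qed
  then show ?thesis unfolding dominated_graph_def using subspace_span by fast
qed

theorem hahn_banach_sublinear:
  fixes q :: "'v::real_vector \<Rightarrow> real"
  assumes q: "sublinear q"
  shows "\<exists>L. linear L \<and> (\<forall>x. L x \<le> q x)"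
proof -
  have "dominated_graph q {0}"
    unfolding dominated_graph_def using sublinear_zero[OF q] subspace_single_0[where 'a="'v \<times> real"]
    by (simp add: zero_prod_def)
  then have "\<exists>U\<in>{G. dominated_graph q G}. \<forall>X\<in>C. X \<subseteq> U"
    if "C \<in> chains {G. dominated_graph q G}" for C
    using dominated_graph_Union_chain[OF that] by (cases "C = {}") auto
  then obtain M where M: "dominated_graph q M"
    and max: "\<And>G. dominated_graph q G \<Longrightarrow> M \<subseteq> G \<Longrightarrow> G = M"
    using Zorn_Lemma2[of "{G. dominated_graph q G}"] by auto
  have S: "subspace M" using M unfolding dominated_graph_def by blast
  have total: "\<exists>a. (x, a) \<in> M" for x
  proof -
    obtain c where "dominated_graph q (span (insert (x, c) M))"
      using dominated_graph_extend[OF q M] by blast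
    moreover have "M \<subseteq> span (insert (x, c) M)"
      using span_superset by blast
    ultimately have "span (insert (x, c) M) = M"
      by (rule max)
    then show ?thesis using span_superset by blast
  qed
  define L where "L x = (THE a. (x, a) \<in> M)" for x
  have graph: "(x, L x) \<in> M" for x
    unfolding L_def using total dominated_graph_single_valued[OF q M] by (metis theI)
  have L_eq: "L x = a" if "(x, a) \<in> M" for x a
    using dominated_graph_single_valued[OF q M graph that] .
  have "linear L"
  proof
    show "L (x + y) = L x + L y" for x y
      using subspace_add[OF S graph graph] by (intro L_eq) simp
    show "L (c *\<^sub>R x) = c *\<^sub>R L x" for c x
      using subspace_scale[OF S graph] by (intro L_eq) simp
  qed
  moreover have "L x \<le> q x" for x using M graph unfolding dominated_graph_def by blast
  ultimately show ?thesis by blast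
qed

context
  fixes p :: "'v::real_vector \<Rightarrow> real" and K :: "'v set" and \<beta> :: real
  assumes p: "sublinear p" and K: "convex K" "K \<noteq> {}" and bound: "\<And>k. k \<in> K \<Longrightarrow> \<beta> \<le> p k"
begin

text \<open>A sublinear minorant of \<open>p\<close> that is at most \<open>-\<beta>\<close> on \<open>-K\<close>, so that every linear
  functional below it is \<open>\<ge> \<beta>\<close> on \<open>K\<close>.\<close>
definition mazur_orlicz_gauge :: "'v \<Rightarrow> real" where
  "mazur_orlicz_gauge v = Inf {p (v + t *\<^sub>R k) - t * \<beta> |t k. 0 \<le> t \<and> k \<in> K}"

lemma mazur_orlicz_gauge_le:
  assumes "0 \<le> t" "k \<in> K"
  shows "mazur_orlicz_gauge v \<le> p (v + t *\<^sub>R k) - t * \<beta>"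
proof -
  have "- p (- v) \<le> p (v + t *\<^sub>R k) - t * \<beta>" if "0 \<le> t" "k \<in> K" for t k
  proof -
    have "t * \<beta> \<le> p (t *\<^sub>R k)"
      using bound[OF \<open>k \<in> K\<close>] sublinear_scaleR[OF p, of t k] sublinear_zero[OF p] \<open>0 \<le> t\<close>
      by (cases "t = 0") (auto intro: mult_left_mono)
    also have "\<dots> \<le> p (v + t *\<^sub>R k) + p (- v)"
      using sublinear_add[OF p, of "v + t *\<^sub>R k" "- v"] by simp
    finally show ?thesis by simp
  qed
  then show ?thesis
    unfolding mazur_orlicz_gauge_def using assms by (intro cInf_lower bdd_belowI[of _ "- p (- v)"]) auto
qed

lemma le_mazur_orlicz_gauge:
  assumes "\<And>t k. 0 \<le> t \<Longrightarrow> k \<in> K \<Longrightarrow> c \<le> p (v + t *\<^sub>R k) - t * \<beta>"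
  shows "c \<le> mazur_orlicz_gauge v"
  unfolding mazur_orlicz_gauge_def
  by (intro cInf_greatest) (use K(2) in fastforce, use assms in auto)

lemma mazur_orlicz_gauge_add: "mazur_orlicz_gauge (x + y) \<le> mazur_orlicz_gauge x + mazur_orlicz_gauge y"
proof -
  have sum: "mazur_orlicz_gauge (x + y)
      \<le> (p (x + t1 *\<^sub>R k1) - t1 * \<beta>) + (p (y + t2 *\<^sub>R k2) - t2 * \<beta>)"
    if "0 \<le> t1" "k1 \<in> K" "0 \<le> t2" "k2 \<in> K" for t1 k1 t2 k2
  proof (cases "t1 + t2 = 0")
    case True
    then have "t1 = 0" "t2 = 0" using that by auto
    then show ?thesis
      using mazur_orlicz_gauge_le[of 0 k1 "x + y"] sublinear_add[OF p, of x y] that by simp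
  next
    case False
    then have t: "0 < t1 + t2" using that by simp
    define k where "k = (t1 / (t1 + t2)) *\<^sub>R k1 + (t2 / (t1 + t2)) *\<^sub>R k2"
    have "k \<in> K"
      unfolding k_def using convexD[OF K(1) \<open>k1 \<in> K\<close> \<open>k2 \<in> K\<close>] t that
      by (simp add: add_divide_distrib[symmetric])
    moreover have "(t1 + t2) *\<^sub>R k = t1 *\<^sub>R k1 + t2 *\<^sub>R k2"
      unfolding k_def using t by (simp add: scaleR_add_right)
    then have "x + y + (t1 + t2) *\<^sub>R k = (x + t1 *\<^sub>R k1) + (y + t2 *\<^sub>R k2)"
      by (simp add: algebra_simps)
    ultimately show ?thesis
      using mazur_orlicz_gauge_le[of "t1 + t2" k "x + y"] t
        sublinear_add[OF p, of "x + t1 *\<^sub>R k1" "y + t2 *\<^sub>R k2"]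
      by (simp add: algebra_simps)
  qed
  have "mazur_orlicz_gauge (x + y) - (p (y + t2 *\<^sub>R k2) - t2 * \<beta>) \<le> mazur_orlicz_gauge x"
    if "0 \<le> t2" "k2 \<in> K" for t2 k2
    by (intro le_mazur_orlicz_gauge) (smt (verit) sum that)
  then have "mazur_orlicz_gauge (x + y) - mazur_orlicz_gauge x \<le> mazur_orlicz_gauge y"
    by (intro le_mazur_orlicz_gauge) (simp add: algebra_simps)
  then show ?thesis by simp
qed

lemma mazur_orlicz_gauge_scaleR_le:
  assumes c: "0 < c"
  shows "mazur_orlicz_gauge (c *\<^sub>R x) \<le> c * mazur_orlicz_gauge x"
proof -
  have "mazur_orlicz_gauge (c *\<^sub>R x) / c \<le> p (x + t *\<^sub>R k) - t * \<beta>" if "0 \<le> t" "k \<in> K" for t k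
  proof -
    have "mazur_orlicz_gauge (c *\<^sub>R x) \<le> p (c *\<^sub>R x + (c * t) *\<^sub>R k) - (c * t) * \<beta>"
      using mazur_orlicz_gauge_le[of "c * t" k "c *\<^sub>R x"] that c by simp
    also have "c *\<^sub>R x + (c * t) *\<^sub>R k = c *\<^sub>R (x + t *\<^sub>R k)" by (simp add: algebra_simps)
    also have "p \<dots> - (c * t) * \<beta> = c * (p (x + t *\<^sub>R k) - t * \<beta>)"
      using sublinear_scaleR[OF p c, of "x + t *\<^sub>R k"] by (simp add: right_diff_distrib)
    finally show ?thesis using c by (simp add: divide_le_eq mult.commute)
  qed
  then have "mazur_orlicz_gauge (c *\<^sub>R x) / c \<le> mazur_orlicz_gauge x"
    by (rule le_mazur_orlicz_gauge)
  then show ?thesis using c by (simp add: divide_le_eq mult.commute)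
qed

lemma sublinear_mazur_orlicz_gauge: "sublinear mazur_orlicz_gauge"
proof -
  have "mazur_orlicz_gauge (c *\<^sub>R x) = c * mazur_orlicz_gauge x" if c: "0 < c" for c x
  proof -
    have "mazur_orlicz_gauge x \<le> (1 / c) * mazur_orlicz_gauge (c *\<^sub>R x)"
      using mazur_orlicz_gauge_scaleR_le[of "1 / c" "c *\<^sub>R x"] c by simp
    then show ?thesis using mazur_orlicz_gauge_scaleR_le[OF c, of x] c by (simp add: field_simps)
  qed
  then show ?thesis unfolding sublinear_def using mazur_orlicz_gauge_add by blast
qed

theorem mazur_orlicz:
  "\<exists>L. linear L \<and> (\<forall>x. L x \<le> p x) \<and> (\<forall>k\<in>K. \<beta> \<le> L k)"
proof -
  obtain L where L: "linear L" "\<And>x. L x \<le> mazur_orlicz_gauge x"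
    using hahn_banach_sublinear[OF sublinear_mazur_orlicz_gauge] by blast
  obtain k0 where "k0 \<in> K" using K(2) by blast
  then have "L x \<le> p x" for x
    using L(2)[of x] mazur_orlicz_gauge_le[of 0 k0 x] by simp
  moreover have "\<beta> \<le> L k" if "k \<in> K" for k
    using L(2)[of "- k"] mazur_orlicz_gauge_le[OF _ that, of 1 "- k"] sublinear_zero[OF p]
      linear_neg[OF L(1), of k]
    by simp
  ultimately show ?thesis using L(1) by blast
qed

end

lemma convex_separation_from_ball:
  fixes K :: "'v::real_normed_vector set"
  assumes "convex K" "K \<noteq> {}" "\<And>k. k \<in> K \<Longrightarrow> \<epsilon> \<le> norm k"
  shows "\<exists>\<Lambda> :: 'v \<Rightarrow>\<^sub>L real. \<forall>k\<in>K. \<epsilon> \<le> \<Lambda> k"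
proof -
  obtain L where L: "linear L" "\<And>x. L x \<le> norm x" "\<And>k. k \<in> K \<Longrightarrow> \<epsilon> \<le> L k"
    using mazur_orlicz[OF sublinear_norm assms] by blast
  have "\<bar>L x\<bar> \<le> norm x" for x
    using L(2)[of x] L(2)[of "- x"] linear_neg[OF L(1), of x] by simp
  then have "bounded_linear L"
    using L(1) by (intro bounded_linear_intro[where K=1]) (auto simp: linear_add linear_scale)
  then show ?thesis using L(3) by (intro exI[of _ "Blinfun L"]) (simp add: bounded_linear_Blinfun_apply)
qed

section \<open>Continuous functionals on products\<close>

lemma blinfun_Pair_split:
  fixes \<Lambda> :: "('v::real_normed_vector \<times> 'w::real_normed_vector) \<Rightarrow>\<^sub>L 'c::real_normed_vector"
  obtains A :: "'v \<Rightarrow>\<^sub>L 'c" and B :: "'w \<Rightarrow>\<^sub>L 'c" where "\<And>x y. \<Lambda> (x, y) = A x + B y"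
proof
  have "bounded_linear (\<lambda>x. \<Lambda> (x, 0))" "bounded_linear (\<lambda>y. \<Lambda> (0, y))"
    by (auto intro!: bounded_linear_compose[OF blinfun.bounded_linear_right] bounded_linear_Pair
        bounded_linear_ident bounded_linear_zero)
  then have "Blinfun (\<lambda>x. \<Lambda> (x, 0)) x = \<Lambda> (x, 0)" "Blinfun (\<lambda>y. \<Lambda> (0, y)) y = \<Lambda> (0, y)" for x y
    by (simp_all add: bounded_linear_Blinfun_apply)
  then show "\<Lambda> (x, y) = Blinfun (\<lambda>x. \<Lambda> (x, 0)) x + Blinfun (\<lambda>y. \<Lambda> (0, y)) y" for x y
    using blinfun.add_right[of \<Lambda> "(x, 0)" "(0, y)"] by simp
qed

lemma blinfun_apply_real: "blinfun_apply (B :: real \<Rightarrow>\<^sub>L 'c::real_normed_vector) s = s *\<^sub>R B 1"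
  using blinfun.scaleR_right[of B s 1] by simp

lemma blinfun_split4:
  fixes \<Lambda> :: "('a::real_normed_vector \<times> 'b::real_normed_vector \<times> real \<times> real) \<Rightarrow>\<^sub>L real"
  obtains A :: "'a \<Rightarrow>\<^sub>L real" and G :: "'b \<Rightarrow>\<^sub>L real" and \<beta> \<gamma>
  where "\<And>x y s t. \<Lambda> (x, y, s, t) = A x + G y + \<beta> * s + \<gamma> * t"
proof -
  obtain A :: "'a \<Rightarrow>\<^sub>L real" and \<Lambda>1 :: "('b \<times> real \<times> real) \<Rightarrow>\<^sub>L real"
    where \<Lambda>: "\<And>x r. \<Lambda> (x, r) = A x + \<Lambda>1 r"
    by (rule blinfun_Pair_split[of \<Lambda>]) (rule that)
  obtain G :: "'b \<Rightarrow>\<^sub>L real" and \<Lambda>2 :: "(real \<times> real) \<Rightarrow>\<^sub>L real"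
    where \<Lambda>1: "\<And>y r. \<Lambda>1 (y, r) = G y + \<Lambda>2 r"
    by (rule blinfun_Pair_split[of \<Lambda>1]) (rule that)
  obtain B C :: "real \<Rightarrow>\<^sub>L real" where \<Lambda>2: "\<And>s t. \<Lambda>2 (s, t) = B s + C t"
    by (rule blinfun_Pair_split[of \<Lambda>2]) (rule that)
  have "\<Lambda> (x, y, s, t) = A x + G y + B 1 * s + C 1 * t" for x y s t
    using blinfun_apply_real[of B s] blinfun_apply_real[of C t] by (simp add: \<Lambda> \<Lambda>1 \<Lambda>2 mult.commute)
  then show thesis by (rule that)
qed

lemma norm_Pair4_components:
  fixes a :: "'a::real_normed_vector" and b :: "'b::real_normed_vector" and s t :: real
  shows "norm a \<le> norm (a, b, s, t)" and "norm b \<le> norm (a, b, s, t)"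
    and "\<bar>s\<bar> \<le> norm (a, b, s, t)" and "\<bar>t\<bar> \<le> norm (a, b, s, t)"
proof -
  have "norm (b, s, t) \<le> norm (a, b, s, t)" "norm (s, t) \<le> norm (b, s, t)"
    by (rule norm_snd_le)+
  moreover have "norm b \<le> norm (b, s, t)" "\<bar>s\<bar> \<le> norm (s, t)" "\<bar>t\<bar> \<le> norm (s, t)"
    using norm_fst_le[of b] norm_fst_le[of s] norm_snd_le[of t] by auto
  ultimately show "norm b \<le> norm (a, b, s, t)" "\<bar>s\<bar> \<le> norm (a, b, s, t)" "\<bar>t\<bar> \<le> norm (a, b, s, t)"
    by linarith+
  show "norm a \<le> norm (a, b, s, t)" by (rule norm_fst_le)
qed

lemma blinfun_nearly_norming_vector:
  fixes A :: "'a::real_normed_vector \<Rightarrow>\<^sub>L real"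
  assumes "0 < \<eta>"
  obtains u where "norm u \<le> 1" "norm A - \<eta> \<le> A u"
proof -
  have "\<exists>u. norm u \<le> 1 \<and> norm A - \<eta> \<le> A u"
  proof (rule ccontr)
    assume "\<nexists>u. norm u \<le> 1 \<and> norm A - \<eta> \<le> A u"
    then have below: "A u < norm A - \<eta>" if "norm u \<le> 1" for u
      using that by force
    have "norm A \<le> norm A - \<eta>"
    proof (rule norm_blinfun_bound)
      show "0 \<le> norm A - \<eta>" using below[of 0] by simp
      show "norm (A x) \<le> (norm A - \<eta>) * norm x" for x
      proof (cases "x = 0")
        case False
        define u where "u = (1 / norm x) *\<^sub>R x"
        have "norm u \<le> 1" "norm (- u) \<le> 1" using False unfolding u_def by simp_all
        then have "A u < norm A - \<eta>" "A (- u) < norm A - \<eta>" using below by blast+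
        then have "\<bar>A u\<bar> \<le> norm A - \<eta>" by (simp add: blinfun.minus_right)
        moreover have "A x = norm x * A u"
          unfolding u_def using False by (simp add: blinfun.scaleR_right)
        ultimately show ?thesis by (simp add: abs_mult mult.commute mult_left_mono)
      qed simp
    qed
    then show False using assms by simp
  qed
  then show thesis using that by blast
qed

lemma blinfun_nearly_norming_in_cball:
  fixes A :: "'a::real_normed_vector \<Rightarrow>\<^sub>L real"
  assumes "0 \<le> M" "0 < \<eta>"
  obtains u where "norm u \<le> M" "M * norm A - \<eta> \<le> A u"
proof -
  obtain u where u: "norm u \<le> 1" "norm A - \<eta> / (M + 1) \<le> A u"
    using blinfun_nearly_norming_vector[of "\<eta> / (M + 1)" A] assms by auto
  have "M * (norm A - \<eta> / (M + 1)) \<le> M * A u"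
    using u(2) assms(1) by (rule mult_left_mono)
  moreover have "M * (\<eta> / (M + 1)) \<le> \<eta>"
    using assms by (simp add: field_simps)
  ultimately have "M * norm A - \<eta> \<le> A (M *\<^sub>R u)"
    by (simp add: blinfun.scaleR_right right_diff_distrib)
  moreover have "norm (M *\<^sub>R u) \<le> M"
    using u(1) assms(1) by (simp add: mult_left_le)
  ultimately show ?thesis using that by blast
qed

section \<open>Affine minorants and the biconjugate\<close>

lemma convex_fun_epigraph:
  fixes f :: "'v::real_vector \<Rightarrow> ereal"
  assumes "convex_fun f"
  shows "convex {(w, s). f w \<le> ereal s}"
proof (rule convexI)
  fix p1 p2 :: "'v \<times> real" and u v :: real
  assume p: "p1 \<in> {(w, s). f w \<le> ereal s}" "p2 \<in> {(w, s). f w \<le> ereal s}"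
    and uv: "0 \<le> u" "0 \<le> v" "u + v = 1"
  obtain w1 s1 w2 s2 where e: "p1 = (w1, s1)" "p2 = (w2, s2)" by (cases p1, cases p2)
  have "u = 1 - v" using uv by simp
  have "f (u *\<^sub>R w1 + v *\<^sub>R w2) \<le> ereal u * f w1 + ereal v * f w2"
    using assms uv unfolding convex_fun_def \<open>u = 1 - v\<close> by simp
  also have "\<dots> \<le> ereal u * ereal s1 + ereal v * ereal s2"
    using p e uv by (intro add_mono ereal_mult_left_mono) auto
  finally show "u *\<^sub>R p1 + v *\<^sub>R p2 \<in> {(w, s). f w \<le> ereal s}" using e by simp
qed

lemma ereal_le_if_upper_bounds:
  assumes "\<And>s. x \<le> ereal s \<Longrightarrow> h \<le> s"
  shows "ereal h \<le> x"
proof (cases x)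
  case MInf
  then have "h \<le> h - 1" using assms by simp
  then show ?thesis by simp
qed (use assms in auto)

lemma proper_convex_lsc_affine_minorant:
  fixes f :: "'v::real_normed_vector \<Rightarrow> ereal"
  assumes proper: "proper_fun f" and convex: "convex_fun f" and lsc: "lsc_fun f"
  obtains a :: "'v \<Rightarrow>\<^sub>L real" and c where "\<And>w. ereal (a w - c) \<le> f w"
proof -
  obtain w0 r where fw0: "f w0 = ereal r"
    using proper unfolding proper_fun_def by (metis ereal_cases)
  have "open (- {w. f w \<le> ereal (r - 1/2)})" using lsc unfolding lsc_fun_def by blast
  moreover have "w0 \<in> - {w. f w \<le> ereal (r - 1/2)}" using fw0 by simp
  ultimately obtain \<delta>1 where "0 < \<delta>1" and far: "\<And>w. dist w0 w < \<delta>1 \<Longrightarrow> ereal (r - 1/2) < f w"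
    unfolding open_contains_ball by (force simp: subset_eq)
  define \<delta> where "\<delta> = min \<delta>1 (1/2)"
  define K where "K = (\<lambda>p. p - (w0, r - 1)) ` {(w, s). f w \<le> ereal s}"
  have "convex K"
    unfolding K_def by (intro convex_translation_subtract convex_fun_epigraph[OF convex])
  have "(w0, r) \<in> {(w, s). f w \<le> ereal s}" using fw0 by simp
  then have "K \<noteq> {}" unfolding K_def by blast
  \<comment> \<open>lower semicontinuity at \<open>w0\<close> keeps the epigraph away from \<open>(w0, r - 1)\<close>\<close>
  have far_K: "\<delta> \<le> norm k" if "k \<in> K" for k
  proof (rule ccontr)
    assume small: "\<not> \<delta> \<le> norm k"
    obtain w s where ws: "f w \<le> ereal s" "k = (w - w0, s - (r - 1))"
      using \<open>k \<in> K\<close> unfolding K_def by auto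
    have "norm (w - w0) \<le> norm k" using norm_fst_le[of "w - w0"] ws(2) by simp
    then have "dist w0 w < \<delta>1"
      using small unfolding \<delta>_def by (simp add: dist_norm norm_minus_commute)
    moreover have "s < r - 1/2"
      using norm_snd_le[of "s - (r - 1)" "w - w0"] small ws(2) unfolding \<delta>_def by simp
    ultimately show False using far ws(1) by (meson ereal_less_eq(3) le_less_trans less_imp_le not_le)
  qed
  obtain \<Lambda> :: "('v \<times> real) \<Rightarrow>\<^sub>L real" where sep: "\<And>k. k \<in> K \<Longrightarrow> \<delta> \<le> \<Lambda> k"
    using convex_separation_from_ball[OF \<open>convex K\<close> \<open>K \<noteq> {}\<close> far_K] by blast
  obtain A :: "'v \<Rightarrow>\<^sub>L real" and B :: "real \<Rightarrow>\<^sub>L real" where AB: "\<And>w s. \<Lambda> (w, s) = A w + B s"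
    by (rule blinfun_Pair_split[of \<Lambda>]) (rule that)
  define \<beta> where "\<beta> = B 1"
  have support: "\<delta> \<le> A w - A w0 + \<beta> * (s - (r - 1))" if "f w \<le> ereal s" for w s
  proof -
    have "(w - w0, s - (r - 1)) \<in> K"
      using that unfolding K_def by (auto intro!: image_eqI[of _ _ "(w, s)"])
    from sep[OF this] show ?thesis
      unfolding AB \<beta>_def blinfun_apply_real[of B "s - (r - 1)"] by (simp add: blinfun.diff_right mult.commute)
  qed
  have "0 < \<beta>"
    using support[of w0 r] fw0 \<open>0 < \<delta>1\<close> unfolding \<delta>_def by simp
  have "ereal ((- (1 / \<beta>) *\<^sub>R A) w - (- (\<delta> + A w0 + \<beta> * (r - 1)) / \<beta>)) \<le> f w" for w
  proof (rule ereal_le_if_upper_bounds)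
    fix s assume "f w \<le> ereal s"
    from support[OF this] \<open>0 < \<beta>\<close>
    show "(- (1 / \<beta>) *\<^sub>R A) w - (- (\<delta> + A w0 + \<beta> * (r - 1)) / \<beta>) \<le> s"
      by (simp add: blinfun.bilinear_simps field_simps)
  qed
  then show ?thesis by (rule that)
qed

lemma fenchel_biconj_ge_affine_minorant:
  fixes f :: "'a::real_normed_vector \<times> 'b::real_normed_vector \<Rightarrow> ereal"
    and a :: "'a \<Rightarrow>\<^sub>L real" and g :: "'b \<Rightarrow>\<^sub>L real"
    and \<Phi> :: "('a \<Rightarrow>\<^sub>L real) \<Rightarrow>\<^sub>L real" and \<Psi> :: "('b \<Rightarrow>\<^sub>L real) \<Rightarrow>\<^sub>L real"
  assumes "\<And>x y. ereal (a x + g y - c) \<le> f (x, y)"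
  shows "ereal (\<Phi> a + \<Psi> g - c) \<le> fenchel_conj (fenchel_conj f) (\<Phi>, \<Psi>)"
proof -
  have "ereal (a x + g y) - f (x, y) \<le> ereal c" for x y
    using assms[of x y] by (cases "f (x, y)") auto
  then have "fenchel_conj f (a, g) \<le> ereal c"
    unfolding fenchel_conj_def by (auto intro: SUP_least)
  then have "ereal (\<Phi> a + \<Psi> g - c) \<le> ereal (\<Phi> a + \<Psi> g) - fenchel_conj f (a, g)"
    by (cases "fenchel_conj f (a, g)") auto
  also have "\<dots> \<le> fenchel_conj (fenchel_conj f) (\<Phi>, \<Psi>)"
    unfolding fenchel_conj_def[of "fenchel_conj f"] by (auto intro: SUP_upper2[of "(a, g)"])
  finally show ?thesis .
qed

lemma minorant_combine_support:
  fixes f :: "'p \<Rightarrow> ereal"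
  assumes minorant: "\<And>p. ereal (h p) \<le> f p"
    and support: "\<And>p s. f p \<le> ereal s \<Longrightarrow> \<kappa> \<le> l p + \<beta> * s"
    and "0 \<le> \<beta>" "0 \<le> t"
  shows "ereal ((h p + t * (\<kappa> - l p)) / (1 + t * \<beta>)) \<le> f p"
proof (rule ereal_le_if_upper_bounds)
  fix s assume s: "f p \<le> ereal s"
  have "h p \<le> s" using order_trans[OF minorant[of p] s] by simp
  moreover have "t * (\<kappa> - l p) \<le> t * (\<beta> * s)"
    using support[OF s] \<open>0 \<le> t\<close> by (simp add: mult_left_mono)
  ultimately have "h p + t * (\<kappa> - l p) \<le> (1 + t * \<beta>) * s" by (simp add: algebra_simps)
  moreover have "0 < 1 + t * \<beta>" using assms(3,4) by (simp add: add_pos_nonneg)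
  ultimately show "(h p + t * (\<kappa> - l p)) / (1 + t * \<beta>) \<le> s" by (simp add: divide_le_eq mult.commute)
qed

lemma fenchel_biconj_pos_of_support:
  fixes f :: "'a::real_normed_vector \<times> 'b::real_normed_vector \<Rightarrow> ereal"
    and a0 A :: "'a \<Rightarrow>\<^sub>L real" and g0 G :: "'b \<Rightarrow>\<^sub>L real"
    and \<Phi> :: "('a \<Rightarrow>\<^sub>L real) \<Rightarrow>\<^sub>L real" and \<Psi> :: "('b \<Rightarrow>\<^sub>L real) \<Rightarrow>\<^sub>L real"
  assumes minorant: "\<And>x y. ereal (a0 x + g0 y - c0) \<le> f (x, y)"
    and support: "\<And>x y s. f (x, y) \<le> ereal s \<Longrightarrow> \<kappa> \<le> A x + G y + \<beta> * s"
    and "0 \<le> \<beta>" and gap: "\<Phi> A + \<Psi> G < \<kappa>"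
  shows "0 < fenchel_conj (fenchel_conj f) (\<Phi>, \<Psi>)"
proof -
  have "0 < \<kappa> - \<Phi> A - \<Psi> G" using gap by simp
  then obtain n where n: "c0 - \<Phi> a0 - \<Psi> g0 < real n * (\<kappa> - \<Phi> A - \<Psi> G)"
    using reals_Archimedean3 by blast
  define t where "t = real n"
  define D where "D = 1 + t * \<beta>"
  have "0 < D" unfolding D_def t_def using \<open>0 \<le> \<beta>\<close> by (simp add: add_pos_nonneg)
  \<comment> \<open>the minorant tilted by \<open>t\<close> times the support inequality, renormalised\<close>
  define a where "a = (1 / D) *\<^sub>R (a0 - t *\<^sub>R A)"
  define g where "g = (1 / D) *\<^sub>R (g0 - t *\<^sub>R G)"
  define c where "c = (c0 - t * \<kappa>) / D"
  have "a x + g y - c = (a0 x + g0 y - c0 + t * (\<kappa> - (A x + G y))) / D" for x y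
    unfolding a_def g_def c_def using \<open>0 < D\<close> by (simp add: blinfun.bilinear_simps field_simps)
  then have "ereal (a x + g y - c) \<le> f (x, y)" for x y
    using minorant_combine_support[of "\<lambda>(x, y). a0 x + g0 y - c0" f \<kappa> "\<lambda>(x, y). A x + G y" \<beta> t "(x, y)"]
      minorant support \<open>0 \<le> \<beta>\<close>
    unfolding D_def t_def by auto
  then have "ereal (\<Phi> a + \<Psi> g - c) \<le> fenchel_conj (fenchel_conj f) (\<Phi>, \<Psi>)"
    by (rule fenchel_biconj_ge_affine_minorant)
  moreover have "\<Phi> a + \<Psi> g - c = (\<Phi> a0 + \<Psi> g0 - c0 + t * (\<kappa> - \<Phi> A - \<Psi> G)) / D"
    unfolding a_def g_def c_def using \<open>0 < D\<close> by (simp add: blinfun.bilinear_simps field_simps)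
  then have "0 < ereal (\<Phi> a + \<Psi> g - c)"
    using n \<open>0 < D\<close> unfolding t_def by simp
  ultimately show ?thesis by (meson order_less_le_trans)
qed

section \<open>Approximate points\<close>

lemma separating_functional_if_no_approximant:
  fixes f :: "'a::real_normed_vector \<times> 'b::real_normed_vector \<Rightarrow> ereal" and zs :: "'a \<Rightarrow>\<^sub>L real"
  assumes proper: "proper_fun f" and convex: "convex_fun f" and "0 < \<epsilon>" "0 \<le> M"
    and no_approx: "\<not> (\<exists>x y. f (x, y) \<le> ereal \<epsilon> \<and> norm x \<le> M + \<epsilon> \<and> norm y \<le> \<epsilon>
      \<and> \<bar>zs x - c\<bar> \<le> \<epsilon>)"
  obtains A :: "'a \<Rightarrow>\<^sub>L real" and G :: "'b \<Rightarrow>\<^sub>L real" and \<beta> \<gamma>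
  where "0 \<le> \<beta>"
    and "\<And>x y s u. f (x, y) \<le> ereal s \<Longrightarrow> norm u \<le> M \<Longrightarrow>
      \<epsilon> + A u \<le> A x + G y + \<beta> * s + \<gamma> * (zs x - c)"
proof -
  define T :: "(('a \<times> 'b) \<times> real) \<times> 'a \<Rightarrow> 'a \<times> 'b \<times> real \<times> real"
    where "T = (\<lambda>(((x, y), s), u). (x - u, y, s, zs x))"
  define K where "K = (\<lambda>v. v - (0, 0, 0, c)) ` T ` ({(p, s). f p \<le> ereal s} \<times> cball 0 M)"
  have "linear T"
    unfolding T_def
    by (intro linearI) (auto simp: case_prod_beta blinfun.bilinear_simps scaleR_right_diff_distrib)
  moreover have "convex ({(p, s). f p \<le> ereal s} \<times> cball (0::'a) M)"
    by (intro convex_Times convex_fun_epigraph[OF convex] convex_cball)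
  ultimately have "convex K"
    unfolding K_def by (intro convex_translation_subtract convex_linear_image)
  have in_K: "(x - u, y, s, zs x - c) \<in> K" if "f (x, y) \<le> ereal s" "norm u \<le> M" for x y s u
    using that unfolding K_def T_def
    by (auto intro!: image_eqI[of _ _ "(x - u, y, s, zs x)"] image_eqI[of _ _ "(((x, y), s), u)"])
  obtain x1 y1 r1 where r1: "f (x1, y1) = ereal r1"
    using proper unfolding proper_fun_def by (metis ereal_cases surj_pair)
  then have "K \<noteq> {}" using in_K[of x1 y1 r1 0] assms(4) by auto
  have far_K: "\<epsilon> \<le> norm k" if "k \<in> K" for k
  proof (rule ccontr)
    assume small: "\<not> \<epsilon> \<le> norm k"
    obtain x y s u where xysu: "f (x, y) \<le> ereal s" "norm u \<le> M" "k = (x - u, y, s, zs x - c)"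
      using \<open>k \<in> K\<close> unfolding K_def T_def by auto
    have "norm (x - u) \<le> norm k" "norm y \<le> norm k" "\<bar>s\<bar> \<le> norm k" "\<bar>zs x - c\<bar> \<le> norm k"
      unfolding xysu(3) by (rule norm_Pair4_components)+
    moreover have "norm x \<le> norm u + norm (x - u)"
      using norm_triangle_ineq[of u "x - u"] by simp
    ultimately have "norm x \<le> M + \<epsilon>" "norm y \<le> \<epsilon>" "s \<le> \<epsilon>" "\<bar>zs x - c\<bar> \<le> \<epsilon>"
      using small xysu(2) by linarith+
    moreover have "f (x, y) \<le> ereal \<epsilon>" using xysu(1) \<open>s \<le> \<epsilon>\<close> by (simp add: order_trans)
    ultimately show False using no_approx by blast
  qed
  obtain \<Lambda> :: "('a \<times> 'b \<times> real \<times> real) \<Rightarrow>\<^sub>L real" where sep: "\<And>k. k \<in> K \<Longrightarrow> \<epsilon> \<le> \<Lambda> k"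
    using convex_separation_from_ball[OF \<open>convex K\<close> \<open>K \<noteq> {}\<close> far_K] by blast
  obtain A :: "'a \<Rightarrow>\<^sub>L real" and G :: "'b \<Rightarrow>\<^sub>L real" and \<beta> \<gamma>
    where \<Lambda>: "\<And>x y s t. \<Lambda> (x, y, s, t) = A x + G y + \<beta> * s + \<gamma> * t"
    by (rule blinfun_split4[of \<Lambda>]) (rule that)
  have support: "\<epsilon> + A u \<le> A x + G y + \<beta> * s + \<gamma> * (zs x - c)"
    if "f (x, y) \<le> ereal s" "norm u \<le> M" for x y s u
    using sep[OF in_K[OF that]] by (simp add: \<Lambda> blinfun.diff_right)
  have "0 \<le> \<beta>"
  proof (rule ccontr)
    assume "\<not> 0 \<le> \<beta>"
    define Q where "Q = A x1 + G y1 + \<gamma> * (zs x1 - c)"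
    define s where "s = max r1 ((\<epsilon> - Q - 1) / \<beta>)"
    have "\<beta> * s \<le> \<beta> * ((\<epsilon> - Q - 1) / \<beta>)"
      unfolding s_def using \<open>\<not> 0 \<le> \<beta>\<close> by (intro mult_left_mono_neg) auto
    moreover have "f (x1, y1) \<le> ereal s" using r1 unfolding s_def by simp
    then have "\<epsilon> \<le> Q + \<beta> * s"
      using support[of x1 y1 s 0] \<open>0 \<le> M\<close> unfolding Q_def by simp
    ultimately show False using \<open>\<not> 0 \<le> \<beta>\<close> by simp
  qed
  then show ?thesis using that support by blast
qed

theorem lemma7p2:
  fixes f0 :: "'a::banach \<times> ('a \<Rightarrow>\<^sub>L real) \<Rightarrow> ereal"
    and zss :: "('a \<Rightarrow>\<^sub>L real) \<Rightarrow>\<^sub>L real"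
    and zs :: "'a \<Rightarrow>\<^sub>L real"
  assumes nonzero: "\<exists>x::'a. x \<noteq> 0"
    and proper: "proper_fun f0"
    and convex: "convex_fun f0"
    and lsc: "lsc_fun f0"
    and hz: "fenchel_conj (fenchel_conj f0) (zss, 0) \<le> 0"
  shows "\<forall>n::nat. n \<ge> 1 \<longrightarrow> (\<exists>x xs.
           f0 (x, xs) \<le> ereal (1 / real n ^ 2) \<and>
           norm x \<le> norm zss + 1 / real n ^ 2 \<and>
           norm xs \<le> 1 / real n ^ 2 \<and>
           \<bar>zs x - zss zs\<bar> \<le> 1 / real n ^ 2)"
proof (intro allI impI)
  fix n :: nat assume "n \<ge> 1"
  define \<epsilon> where "\<epsilon> = 1 / real n ^ 2"
  have "0 < \<epsilon>" unfolding \<epsilon>_def using \<open>n \<ge> 1\<close> by simp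
  show "\<exists>x xs. f0 (x, xs) \<le> ereal (1 / real n ^ 2) \<and> norm x \<le> norm zss + 1 / real n ^ 2 \<and>
      norm xs \<le> 1 / real n ^ 2 \<and> \<bar>zs x - zss zs\<bar> \<le> 1 / real n ^ 2"
  proof (rule ccontr)
    assume "\<not> ?thesis"
    then obtain A :: "'a \<Rightarrow>\<^sub>L real" and G :: "('a \<Rightarrow>\<^sub>L real) \<Rightarrow>\<^sub>L real" and \<beta> \<gamma>
      where "0 \<le> \<beta>" and support: "\<And>x xs s u. f0 (x, xs) \<le> ereal s \<Longrightarrow>
        norm u \<le> norm zss \<Longrightarrow> \<epsilon> + A u \<le> A x + G xs + \<beta> * s + \<gamma> * (zs x - zss zs)"
      unfolding \<epsilon>_def[symmetric]
      by (rule separating_functional_if_no_approximant[OF proper convex \<open>0 < \<epsilon>\<close> norm_ge_zero])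
        (rule that)
    \<comment> \<open>the bound \<open>zss A \<le> norm zss * norm A\<close> is nearly attained on \<open>cball 0 (norm zss)\<close>\<close>
    obtain u where "norm u \<le> norm zss" "norm zss * norm A - \<epsilon> / 2 \<le> A u"
      using blinfun_nearly_norming_in_cball[of "norm zss" "\<epsilon> / 2" A] \<open>0 < \<epsilon>\<close> by auto
    then have gap: "zss (A + \<gamma> *\<^sub>R zs) < \<epsilon> + A u + \<gamma> * zss zs"
      using norm_blinfun[of zss A] \<open>0 < \<epsilon>\<close> by (simp add: blinfun.bilinear_simps mult.commute)
    obtain a :: "('a \<times> ('a \<Rightarrow>\<^sub>L real)) \<Rightarrow>\<^sub>L real" and c
      where minorant: "\<And>p. ereal (a p - c) \<le> f0 p"
      by (rule proper_convex_lsc_affine_minorant[OF proper convex lsc]) (rule that)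
    obtain a0 :: "'a \<Rightarrow>\<^sub>L real" and g0 :: "('a \<Rightarrow>\<^sub>L real) \<Rightarrow>\<^sub>L real"
      where "\<And>x xs. a (x, xs) = a0 x + g0 xs"
      by (rule blinfun_Pair_split[of a]) (rule that)
    then have "0 < fenchel_conj (fenchel_conj f0) (zss, 0)"
      using minorant support \<open>norm u \<le> norm zss\<close> \<open>0 \<le> \<beta>\<close> gap
      by (intro fenchel_biconj_pos_of_support[of a0 g0 c f0 "\<epsilon> + A u + \<gamma> * zss zs" "A + \<gamma> *\<^sub>R zs" G \<beta>])
        (auto simp: blinfun.bilinear_simps algebra_simps)
    then show False using hz by simp
  qed
qed

end
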